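(* Let $(X,S)$ be an association scheme of order $n>1$ and let $H_1,H_2$ be $n\times n$ Hadamard matrices whose rows and columns are indexed by $X$. Then the association schemes $(\widetilde X,S(H_1))$ and $(\widetilde X,S(H_2))$ are isomorphic if and only if $H_1$ is similar to $H_2$ with respect to $(X,S)$, i.e. there exist $P',Q'\in\mathrm{D}$ and $P,Q\in\mathrm{I}$ such that either $H_2=(P'P)^{-1}H_1Q'Q$ or $H_2^T=(P'P)^{-1}H_1Q'Q$, and moreover $(P'P)^{-1}Q'Q\in\mathrm{D}\rtimes\mathcal{P}(\mathrm{Aut}(X,S))$.
   Context: An association scheme $(X,S)$ consists of a non-empty finite set $X$ and a partition $S$ of $X\times X$ such that: $1_X:=\{(\alpha,\alpha)\mid \alpha\in X\}\in S$; for each $s\in S$, $s^*:=\{(\alpha,\beta)\mid(\beta,\alpha)\in s\}\in S$; and for all $s,t,u\in S$ the number $|\alpha s\cap \beta t^*|$ is constant for $(\alpha,\beta)\in u$, where $\alpha s:=\{\beta\mid(\alpha,\beta)\in s\}$. An isomorphism from a scheme $(X,S)$ to a scheme $(X_1,S_1)$ is a bijection $\phi:X\to X_1$ such that $s\mapsto \phi(s)=\{(\phi(x),\phi(y))\mid (x,y)\in s\}$ is a bijection $S\to S_1$. $\mathrm{Iso}(X,S)$ is the group of isomorphisms from $(X,S)$ to itself (permutations $\sigma$ of $X$ with $\sigma(s)\in S$ for all $s\in S$), and $\mathrm{Aut}(X,S)$ is its subgroup of those $\sigma$ with $\sigma(s)=s$ for all $s\in S$. For a permutation $\sigma$ of $X$,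 $P_\sigma$ is its permutation matrix (indexed by $X$), and for a permutation group $G$, $\mathcal P(G)=\{P_\sigma\mid\sigma\in G\}$. $\mathrm{I}:=\mathcal P(\mathrm{Iso}(X,S))$. $D_x$ is the diagonal matrix indexed by $X$ with $(x,x)$-entry $-1$ and other diagonal entries $1$, and $\mathrm{D}:=\langle D_x\mid x\in X\rangle$ (all diagonal $\pm1$ matrices). $\mathbb{F}_2$ is the field with two elements, and $x_{ab}$ denotes the element $(x,a,b)$ of $X\times\mathbb{F}_2\times\mathbb{F}_2$. For a matrix $H$ indexed by $X$, let $H^{T(0)}=H$ and $H^{T(1)}=H^T$, and let $\delta_{ac}=1$ if $a=c$ and $0$ otherwise. Define $\widetilde X=\{x_{ab}\mid x\in X,\ a,b\in\mathbb{F}_2\}$; $\widetilde t=\{(x_{ab},x_{a(b+1)})\mid x\in X,\ a,b\in\mathbb{F}_2\}$; for $s\in S\setminus\{1_X\}$, $\widetilde s=\{(x_{ab},y_{ac})\mid (x,y)\in s,\ a,b,c\in\mathbb{F}_2\}$; $r^1_H=\{(x_{ab},y_{cd})\mid x,y\in X,\ a,b,c,d\in\mathbb{F}_2,\ (1-\delta_{ac})(H^{T(a)})_{xy}=(-1)^{b+d}\}$; $r^{-1}_H=\{(x_{ab},y_{cd})\mid x,y\in X,\ a,b,c,d\in\mathbb{F}_2,\ a\ne c\}\setminus r^1_H$; $S(H)=\{1_{\widetilde X},\widetilde t\}\cup\{\widetilde s\mid s\in S\setminus\{1_X\}\}\cup\{r^1_H,r^{-1}_H\}$. (This is an association scheme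 for every Hadamard matrix $H$ indexed by $X$.) *)

theory Defs
  imports "HOL-Analysis.Analysis"
begin

definition assoc_scheme :: "'a set \<Rightarrow> ('a \<times> 'a) set set \<Rightarrow> bool" where
  "assoc_scheme X S \<longleftrightarrow>
     X \<noteq> {} \<and> finite X \<and>
     (\<forall>s\<in>S. s \<noteq> {}) \<and>
     (\<forall>s\<in>S. \<forall>s'\<in>S. s \<noteq> s' \<longrightarrow> s \<inter> s' = {}) \<and>
     \<Union>S = X \<times> X \<and>
     Id_on X \<in> S \<and>
     (\<forall>s\<in>S. s\<inverse> \<in> S) \<and>
     (\<forall>s\<in>S. \<forall>t\<in>S. \<forall>u\<in>S. \<exists>c::nat. \<forall>(\<alpha>,\<beta>)\<in>u.
        card ({\<gamma>. (\<alpha>,\<gamma>) \<in> s} \<inter> {\<gamma>. (\<beta>,\<gamma>) \<in> t\<inverse>}) = c)"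

definition rel_image :: "('a \<Rightarrow> 'b) \<Rightarrow> ('a \<times> 'a) set \<Rightarrow> ('b \<times> 'b) set" where
  "rel_image \<phi> s = {(\<phi> x, \<phi> y) | x y. (x,y) \<in> s}"

definition scheme_iso :: "'a set \<Rightarrow> ('a \<times> 'a) set set \<Rightarrow> 'b set \<Rightarrow> ('b \<times> 'b) set set
    \<Rightarrow> ('a \<Rightarrow> 'b) \<Rightarrow> bool" where
  "scheme_iso X S X1 S1 \<phi> \<longleftrightarrow> bij_betw \<phi> X X1 \<and> bij_betw (rel_image \<phi>) S S1"

definition schemes_isomorphic :: "'a set \<Rightarrow> ('a \<times> 'a) set set \<Rightarrow> 'b set \<Rightarrow> ('b \<times> 'b) set set
    \<Rightarrow> bool" where
  "schemes_isomorphic X S X1 S1 \<longleftrightarrow> (\<exists>\<phi>. scheme_iso X S X1 S1 \<phi>)"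

(* Here the point set X is the whole finite type 'a *)
definition Iso_grp :: "('a \<times> 'a) set set \<Rightarrow> ('a \<Rightarrow> 'a) set" where
  "Iso_grp S = {\<sigma>. bij \<sigma> \<and> (\<forall>s\<in>S. rel_image \<sigma> s \<in> S)}"

definition Aut_grp :: "('a \<times> 'a) set set \<Rightarrow> ('a \<Rightarrow> 'a) set" where
  "Aut_grp S = {\<sigma>. bij \<sigma> \<and> (\<forall>s\<in>S. rel_image \<sigma> s = s)}"

(* permutation matrix: P_\<sigma> e_y = e_{\<sigma> y} *)
definition perm_mat :: "('a::finite \<Rightarrow> 'a) \<Rightarrow> real^'a^'a" where
  "perm_mat \<sigma> = (\<chi> x y. if x = \<sigma> y then 1 else 0)"

definition perm_mats :: "('a::finite \<Rightarrow> 'a) set \<Rightarrow> (real^'a^'a) set" where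
  "perm_mats G = perm_mat ` G"

definition sign_diags :: "(real^'a::finite^'a) set" where
  "sign_diags = {A. \<exists>d::'a \<Rightarrow> real. (\<forall>x. d x = 1 \<or> d x = -1) \<and>
                      A = (\<chi> x y. if x = y then d x else 0)}"

(* D \<rtimes> P(G) as the set of products inside the matrix group *)
definition semidirect_D :: "('a::finite \<Rightarrow> 'a) set \<Rightarrow> (real^'a^'a) set" where
  "semidirect_D G = {D ** P | D P. D \<in> sign_diags \<and> P \<in> perm_mats G}"

definition hadamard :: "real^'a::finite^'a \<Rightarrow> bool" where
  "hadamard H \<longleftrightarrow> (\<forall>x y. H $ x $ y = 1 \<or> H $ x $ y = -1) \<and>
                  H ** transpose H = mat (real CARD('a))"

definition hadamard_similar :: "('a::finite \<times> 'a) set set \<Rightarrow> real^'a^'a \<Rightarrow> real^'a^'a \<Rightarrow> bool" where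
  "hadamard_similar S H1 H2 \<longleftrightarrow>
     (\<exists>P' Q' P Q. P' \<in> sign_diags \<and> Q' \<in> sign_diags \<and>
        P \<in> perm_mats (Iso_grp S) \<and> Q \<in> perm_mats (Iso_grp S) \<and>
        (H2 = matrix_inv (P' ** P) ** H1 ** (Q' ** Q) \<or>
         transpose H2 = matrix_inv (P' ** P) ** H1 ** (Q' ** Q)) \<and>
        matrix_inv (P' ** P) ** (Q' ** Q) \<in> semidirect_D (Aut_grp S))"

(* The construction: \<widetilde>X = X \<times> F2 \<times> F2, with F2 = bool (addition = xor); x_ab = (x,a,b) *)
definition t_tilde :: "('a \<times> bool \<times> bool) rel" where
  "t_tilde = {((x,a,b),(x,a,\<not>b)) | x a b. True}"

definition s_tilde :: "('a \<times> 'a) set \<Rightarrow> ('a \<times> bool \<times> bool) rel" where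
  "s_tilde s = {((x,a,b),(y,a,c)) | x y a b c. (x,y) \<in> s}"

definition transp_if :: "bool \<Rightarrow> real^'a::finite^'a \<Rightarrow> real^'a^'a" where
  "transp_if a H = (if a then transpose H else H)"

definition r_one :: "real^'a::finite^'a \<Rightarrow> ('a \<times> bool \<times> bool) rel" where
  "r_one H = {((x,a,b),(y,c,d)) | x y a b c d.
      (1 - (if a = c then 1 else 0)) * (transp_if a H $ x $ y) = (-1::real) ^ (of_bool b + of_bool d)}"

definition r_minus_one :: "real^'a::finite^'a \<Rightarrow> ('a \<times> bool \<times> bool) rel" where
  "r_minus_one H = {((x,a,b),(y,c,d)) | x y a b c d. a \<noteq> c} - r_one H"

definition S_of :: "('a::finite \<times> 'a) set set \<Rightarrow> real^'a^'a \<Rightarrow> ('a \<times> bool \<times> bool) rel set" where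
  "S_of S H = {Id, t_tilde} \<union> s_tilde ` (S - {Id}) \<union> {r_one H, r_minus_one H}"

end

theory Submission
  imports Defs
begin

(* Write x_ab as (x,a,b); call a the layer and b the sign bit of the point.
   The relation t~ is the graph of the flip map (x,a,b) |-> (x,a,~b), and r^1_H, r^-1_H
   together are exactly the pairs of points in different layers.  Any isomorphism phi
   between S(H1) and S(H2) must fix t~ (it is the only non-diagonal class that is the graph
   of a function), hence commutes with the flip, and must map {r^1,r^-1} to itself (the
   only flip-free classes joining different layers), hence preserves "being in different
   layers".  This forces phi to be a layered map (x,a,b) |-> (sigma_a x, a+e, b+eps_a x).
   Such a layered map is an isomorphism iff sigma_0, sigma_1 act in the same way on S by
   isomorphisms and  H2^T(e)(sigma_0 x, sigma_1 y) = +-1 * H1(x,y)  with signs depending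
   on x and y separately; we call such data a layered equivalence.  Computing entries of
   products of monomial (signed permutation) matrices shows that a layered equivalence
   exists iff H1 and H2 are similar with respect to (X,S). *)

section \<open>Signed permutation matrices\<close>

lemma mat_eqI: "(\<And>i j. (A::'b^'n^'m)$i$j = B$i$j) \<Longrightarrow> A = B"
  by (simp add: vec_eq_iff)

lemma mul_left_fun:
  fixes X :: "real^'a::finite^'a"
  assumes "\<And>i k. X$i$k = (if k = f i then w i else 0)"
  shows "(X ** A)$i$j = w i * A$(f i)$j"
  by (simp add: matrix_matrix_mult_def assms if_distrib if_distribR cong: if_cong)

lemma mul_right_fun:
  fixes Y :: "real^'a::finite^'a"
  assumes "\<And>k j. Y$k$j = (if k = g j then w j else 0)"
  shows "(A ** Y)$i$j = A$i$(g j) * w j"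
  by (simp add: matrix_matrix_mult_def assms if_distrib if_distribR cong: if_cong)

definition sdiag :: "('a::finite \<Rightarrow> real) \<Rightarrow> real^'a^'a" where
  "sdiag d = (\<chi> x y. if x = y then d x else 0)"

definition pm1 :: "('a \<Rightarrow> real) \<Rightarrow> bool" where
  "pm1 d \<longleftrightarrow> (\<forall>x. d x = 1 \<or> d x = -1)"

lemma pm1_sq: "pm1 d \<Longrightarrow> d x * d x = 1"
  unfolding pm1_def by (metis mult_1 mult_minus1 minus_minus)

lemma pm1_nonzero: "pm1 d \<Longrightarrow> d x \<noteq> 0"
  using pm1_sq[of d x] by auto

lemma sign_diagsE:
  assumes "P' \<in> sign_diags"
  obtains p where "pm1 p" "P' = sdiag p"
  using assms unfolding sign_diags_def sdiag_def pm1_def by blast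

lemma sign_diagsI: "pm1 p \<Longrightarrow> sdiag p \<in> sign_diags"
  unfolding sign_diags_def sdiag_def pm1_def by blast

lemma sdiag_perm_entry:
  "(sdiag d ** perm_mat \<alpha>)$k$j = (if k = \<alpha> j then d (\<alpha> j) else 0)"
proof -
  have "(sdiag d ** perm_mat \<alpha>)$k$j = sdiag d $ k $ (\<alpha> j) * (\<lambda>_. 1) j"
    by (rule mul_right_fun) (simp add: perm_mat_def)
  then show ?thesis by (simp add: sdiag_def)
qed

lemma sdiag_perm_entry':
  assumes "bij \<beta>"
  shows "(sdiag d ** perm_mat \<beta>)$i$k = (if k = inv \<beta> i then d i else 0)"
proof -
  have "(i = \<beta> k) = (k = inv \<beta> i)"
    using assms by (metis bij_inv_eq_iff)
  then show ?thesis unfolding sdiag_perm_entry by auto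
qed

lemma perm_sdiag_entry:
  assumes "bij \<beta>"
  shows "(perm_mat (inv \<beta>) ** sdiag d)$i$k = (if k = \<beta> i then d (\<beta> i) else 0)"
proof -
  have "(perm_mat (inv \<beta>) ** sdiag d)$i$k = perm_mat (inv \<beta>) $ i $ k * d (id k)"
    by (rule mul_right_fun) (simp add: sdiag_def)
  moreover have "(i = inv \<beta> k) = (k = \<beta> i)"
    using assms by (metis bij_inv_eq_iff)
  ultimately show ?thesis by (simp add: perm_mat_def)
qed

lemma monomial_perm_unique:
  assumes "pm1 d" "sdiag d ** perm_mat \<rho> = sdiag d' ** perm_mat \<rho>'"
  shows "\<rho> = \<rho>'"
proof
  fix j
  have "(sdiag d' ** perm_mat \<rho>') $ \<rho> j $ j = d (\<rho> j)"
    using assms(2) sdiag_perm_entry[of d \<rho> "\<rho> j" j] by simp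
  then show "\<rho> j = \<rho>' j"
    using pm1_nonzero[OF assms(1)] sdiag_perm_entry[of d' \<rho>' "\<rho> j" j] by (auto split: if_splits)
qed

lemma matrix_inv_eqI:
  fixes A B :: "real^'a::finite^'a"
  assumes "A ** B = mat 1" "B ** A = mat 1"
  shows "matrix_inv A = B"
proof -
  have ex: "A ** matrix_inv A = mat 1 \<and> matrix_inv A ** A = mat 1"
    unfolding matrix_inv_def by (rule someI[where x=B]) (use assms in auto)
  have "matrix_inv A = matrix_inv A ** (A ** B)" using assms by simp
  also have "\<dots> = (matrix_inv A ** A) ** B" by (simp add: matrix_mul_assoc)
  also have "\<dots> = B" using ex by simp
  finally show ?thesis .
qed

(* (D P_beta)^-1 = P_beta^-1 D, since D is an involution. *)
lemma matrix_inv_sdiag_perm: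
  assumes "bij \<beta>" "pm1 p"
  shows "matrix_inv (sdiag p ** perm_mat \<beta>) = perm_mat (inv \<beta>) ** sdiag p"
proof (rule matrix_inv_eqI; rule mat_eqI)
  fix i j
  have b1: "\<beta> (inv \<beta> i) = i" using assms(1) by (meson bij_inv_eq_iff)
  have b2: "inv \<beta> (\<beta> i) = i" using assms(1) by (simp add: bij_is_inj)
  have "(sdiag p ** perm_mat \<beta> ** (perm_mat (inv \<beta>) ** sdiag p))$i$j
      = p i * (perm_mat (inv \<beta>) ** sdiag p)$(inv \<beta> i)$j"
    by (rule mul_left_fun) (rule sdiag_perm_entry'[OF assms(1)])
  also have "\<dots> = mat 1 $ i $ j"
    unfolding perm_sdiag_entry[OF assms(1)] b1
    using pm1_sq[OF assms(2)] by (simp add: mat_def)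
  finally show "(sdiag p ** perm_mat \<beta> ** (perm_mat (inv \<beta>) ** sdiag p))$i$j = mat 1 $ i $ j" .
  have "(perm_mat (inv \<beta>) ** sdiag p ** (sdiag p ** perm_mat \<beta>))$i$j
      = p (\<beta> i) * (sdiag p ** perm_mat \<beta>)$(\<beta> i)$j"
    by (rule mul_left_fun[OF perm_sdiag_entry[OF assms(1)]])
  also have "\<dots> = mat 1 $ i $ j"
    unfolding sdiag_perm_entry'[OF assms(1)] b2
    using pm1_sq[OF assms(2)] by (simp add: mat_def)
  finally show "(perm_mat (inv \<beta>) ** sdiag p ** (sdiag p ** perm_mat \<beta>))$i$j = mat 1 $ i $ j" .
qed

lemma monomial_conj_entry:
  assumes "bij \<beta>" "pm1 p"
  shows "(matrix_inv (sdiag p ** perm_mat \<beta>) ** H ** (sdiag q ** perm_mat \<alpha>)) $ i $ j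
         = p (\<beta> i) * H $ (\<beta> i) $ (\<alpha> j) * q (\<alpha> j)"
proof -
  have "(matrix_inv (sdiag p ** perm_mat \<beta>) ** H ** (sdiag q ** perm_mat \<alpha>)) $ i $ j
      = (matrix_inv (sdiag p ** perm_mat \<beta>) ** H) $ i $ (\<alpha> j) * q (\<alpha> j)"
    by (rule mul_right_fun) (rule sdiag_perm_entry)
  also have "(matrix_inv (sdiag p ** perm_mat \<beta>) ** H) $ i $ (\<alpha> j) = p (\<beta> i) * H $ (\<beta> i) $ (\<alpha> j)"
    unfolding matrix_inv_sdiag_perm[OF assms]
    by (rule mul_left_fun) (rule perm_sdiag_entry[OF assms(1)])
  finally show ?thesis by simp
qed

lemma monomial_quotient:
  assumes "bij \<beta>" "pm1 p"
  shows "matrix_inv (sdiag p ** perm_mat \<beta>) ** (sdiag q ** perm_mat \<alpha>)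
         = sdiag (\<lambda>i. p (\<beta> i) * q (\<beta> i)) ** perm_mat (inv \<beta> \<circ> \<alpha>)"
proof (rule mat_eqI)
  fix i j
  have "(i = inv \<beta> (\<alpha> j)) \<longleftrightarrow> (\<beta> i = \<alpha> j)"
    using assms(1) by (metis bij_inv_eq_iff)
  then show "(matrix_inv (sdiag p ** perm_mat \<beta>) ** (sdiag q ** perm_mat \<alpha>)) $ i $ j
      = (sdiag (\<lambda>i. p (\<beta> i) * q (\<beta> i)) ** perm_mat (inv \<beta> \<circ> \<alpha>)) $ i $ j"
    unfolding matrix_inv_sdiag_perm[OF assms] mul_left_fun[OF perm_sdiag_entry[OF assms(1)]]
      sdiag_perm_entry by auto
qed

definition sg :: "bool \<Rightarrow> real" where "sg b = (if b then -1 else 1)"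

(* All entries are +-1, the only property of Hadamard matrices the argument needs. *)
definition pm1_matrix :: "real^'a::finite^'a \<Rightarrow> bool" where
  "pm1_matrix H \<longleftrightarrow> (\<forall>x y. H$x$y = 1 \<or> H$x$y = -1)"

lemma hadamard_pm1_matrix: "hadamard H \<Longrightarrow> pm1_matrix H"
  by (simp add: hadamard_def pm1_matrix_def)

lemma pow_sg: "(-1::real)^(of_bool b + of_bool d) = sg b * sg d"
  by (cases b; cases d) (simp_all add: sg_def)

lemma sg_xor: "sg (a \<noteq> b) = sg a * sg b"
  by (simp add: sg_def)

lemma pm1_sg: "pm1 p \<Longrightarrow> sg (p x = -1) = p x"
  unfolding pm1_def sg_def by (metis one_neq_neg_one)

lemma pm1_matrix_sg: "pm1_matrix H \<Longrightarrow> H$x$y = sg (H$x$y = -1)"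
  unfolding pm1_matrix_def sg_def by (metis one_neq_neg_one)

lemma transp_if_entry: "transp_if a H $ x $ y = (if a then H $ y $ x else H $ x $ y)"
  by (simp add: transp_if_def transpose_def)

lemma pm1_matrix_transp_if: "pm1_matrix H \<Longrightarrow> pm1_matrix (transp_if a H)"
  unfolding pm1_matrix_def transp_if_entry by auto

lemma rel_image_mem: "(u,v) \<in> rel_image f s \<longleftrightarrow> (\<exists>x y. u = f x \<and> v = f y \<and> (x,y) \<in> s)"
  by (auto simp: rel_image_def)

lemma mem_rel_image_bij: "bij f \<Longrightarrow> (f x, f y) \<in> rel_image f s \<longleftrightarrow> (x,y) \<in> s"
  by (auto simp: rel_image_mem bij_is_inj inj_eq)

lemma mem_rel_image_inv: "bij f \<Longrightarrow> (u, v) \<in> rel_image f s \<longleftrightarrow> (inv f u, inv f v) \<in> s"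
  by (metis bij_inv_eq_iff mem_rel_image_bij)

lemma rel_image_eqI:
  assumes "bij f" "\<And>x y. (f x, f y) \<in> R' \<longleftrightarrow> (x,y) \<in> R"
  shows "rel_image f R = R'"
proof (rule set_eqI)
  fix z show "z \<in> rel_image f R \<longleftrightarrow> z \<in> R'"
  proof (cases z)
    case (Pair u v)
    have "u = f (inv f u)" "v = f (inv f v)" using assms(1) by (metis bij_inv_eq_iff)+
    then show ?thesis using assms Pair mem_rel_image_inv[OF assms(1)] by metis
  qed
qed

lemma rel_image_Id: "bij f \<Longrightarrow> rel_image f Id = Id"
  by (rule rel_image_eqI) (auto simp: bij_is_inj inj_eq)

lemma rel_image_comp: "rel_image (f \<circ> g) s = rel_image f (rel_image g s)"
  by (auto simp: rel_image_def)

lemma rel_image_inv_cancel: "bij f \<Longrightarrow> rel_image (inv f) (rel_image f s) = s"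
  by (rule rel_image_eqI) (auto simp: bij_imp_bij_inv mem_rel_image_inv inv_inv_eq)

lemma rel_image_cancel_inv: "bij f \<Longrightarrow> rel_image f (rel_image (inv f) s) = s"
  using rel_image_inv_cancel[of "inv f" s] by (simp add: bij_imp_bij_inv inv_inv_eq)

lemma inj_rel_image: "bij f \<Longrightarrow> inj (rel_image f)"
  by (metis injI rel_image_inv_cancel)

lemma rel_image_Un: "rel_image f (A \<union> B) = rel_image f A \<union> rel_image f B"
  by (auto simp: rel_image_def)

lemma single_valued_rel_image: "inj f \<Longrightarrow> single_valued A \<Longrightarrow> single_valued (rel_image f A)"
  unfolding single_valued_def rel_image_mem by (metis injD)

lemma Id_on_UNIV: "Id_on UNIV = Id" by auto

lemma scheme_Id: "assoc_scheme UNIV S \<Longrightarrow> Id \<in> S"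
  by (simp add: assoc_scheme_def Id_on_UNIV)

lemma scheme_nonempty: "assoc_scheme UNIV S \<Longrightarrow> s \<in> S \<Longrightarrow> s \<noteq> {}"
  by (simp add: assoc_scheme_def)

lemma scheme_offdiag: "assoc_scheme UNIV S \<Longrightarrow> s \<in> S \<Longrightarrow> s \<noteq> Id \<Longrightarrow> (x,y) \<in> s \<Longrightarrow> x \<noteq> y"
  unfolding assoc_scheme_def by (metis Id_on_UNIV IdI disjoint_iff)

lemma finite_rel_sets: "finite (S :: ('a::finite \<times> 'a) set set)"
  by (rule finite_subset[of _ "Pow UNIV"]) auto

(* On a finite scheme an isomorphism permutes the basic relations, so Iso is closed under
   inverses. *)
lemma Iso_grp_image:
  assumes "\<sigma> \<in> Iso_grp (S :: ('a::finite \<times> 'a) set set)"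
  shows "rel_image \<sigma> ` S = S"
proof (rule endo_inj_surj[OF finite_rel_sets])
  show "rel_image \<sigma> ` S \<subseteq> S" using assms by (auto simp: Iso_grp_def)
  show "inj_on (rel_image \<sigma>) S" using assms inj_on_subset[OF inj_rel_image] by (auto simp: Iso_grp_def)
qed

lemma Iso_grp_inv:
  assumes "\<sigma> \<in> Iso_grp (S :: ('a::finite \<times> 'a) set set)"
  shows "inv \<sigma> \<in> Iso_grp S"
proof -
  have b: "bij \<sigma>" using assms by (simp add: Iso_grp_def)
  have "rel_image (inv \<sigma>) s \<in> S" if "s \<in> S" for s
  proof -
    obtain s0 where "s0 \<in> S" "s = rel_image \<sigma> s0" using Iso_grp_image[OF assms] \<open>s \<in> S\<close> by blast
    then show ?thesis using rel_image_inv_cancel[OF b] by simp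
  qed
  then show ?thesis using b by (simp add: Iso_grp_def bij_imp_bij_inv)
qed

lemma two_points:
  assumes "CARD('a) > 1"
  obtains y1 y2 :: "'a::finite" where "y1 \<noteq> y2"
  using assms card_le_Suc0_iff_eq[of "UNIV :: 'a set"] by fastforce

section \<open>The doubled scheme S(H)\<close>

definition layer :: "'a \<times> bool \<times> bool \<Rightarrow> bool" where "layer p = fst (snd p)"

definition flip :: "'a \<times> bool \<times> bool \<Rightarrow> 'a \<times> bool \<times> bool" where
  "flip p = (fst p, fst (snd p), \<not> snd (snd p))"

lemma flip_app [simp]: "flip (x,a,b) = (x,a,\<not>b)"
  by (simp add: flip_def)

lemma layer_app [simp]: "layer (x,a,b) = a"
  by (simp add: layer_def)

lemma mem_t_tilde: "(p,q) \<in> t_tilde \<longleftrightarrow> q = flip p"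
  by (cases p; cases q) (auto simp: t_tilde_def)

lemma mem_s_tilde: "(((x,a,b),(y,c,d)) \<in> s_tilde s) \<longleftrightarrow> c = a \<and> (x,y) \<in> s"
  by (auto simp: s_tilde_def)

lemma mem_r_one:
  "(((x,a,b),(y,c,d)) \<in> r_one H) \<longleftrightarrow> a \<noteq> c \<and> transp_if a H $ x $ y = sg b * sg d"
proof -
  have "(((x,a,b),(y,c,d)) \<in> r_one H) \<longleftrightarrow>
     (1 - (if a = c then 1 else 0)) * (transp_if a H $ x $ y) = sg b * sg d"
    unfolding r_one_def pow_sg[symmetric] by blast
  then show ?thesis by (cases "a = c") (auto simp: sg_def)
qed

lemma mem_r_minus_one:
  "(((x,a,b),(y,c,d)) \<in> r_minus_one H) \<longleftrightarrow> a \<noteq> c \<and> transp_if a H $ x $ y \<noteq> sg b * sg d"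
proof -
  have "(((x,a,b),(y,c,d)) \<in> r_minus_one H) \<longleftrightarrow> a \<noteq> c \<and> ((x,a,b),(y,c,d)) \<notin> r_one H"
    unfolding r_minus_one_def by blast
  then show ?thesis by (auto simp: mem_r_one)
qed

lemma r_one_witness: "pm1_matrix H \<Longrightarrow> ((x,False,False),(y,True,(H$x$y = -1))) \<in> r_one H"
  unfolding mem_r_one transp_if_entry using pm1_matrix_sg[of H x y] by (simp add: sg_def)

lemma r_minus_one_witness: "pm1_matrix H \<Longrightarrow> ((x,False,False),(y,True,(H$x$y = 1))) \<in> r_minus_one H"
  unfolding mem_r_minus_one transp_if_entry pm1_matrix_def sg_def by (cases "H$x$y = 1") auto

lemma cross_layer_eq: "r_one H \<union> r_minus_one H = {(p,q). layer p \<noteq> layer q}"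
proof (rule set_eqI)
  fix z :: "('a \<times> bool \<times> bool) \<times> 'a \<times> bool \<times> bool"
  obtain x a b y c d where "z = ((x,a,b),(y,c,d))" by (metis prod.exhaust)
  then show "z \<in> r_one H \<union> r_minus_one H \<longleftrightarrow> z \<in> {(p,q). layer p \<noteq> layer q}"
    by (auto simp: mem_r_one mem_r_minus_one)
qed

lemma r_one_ne_r_minus_one: "pm1_matrix H \<Longrightarrow> r_one H \<noteq> r_minus_one H"
proof
  assume "pm1_matrix H" "r_one H = r_minus_one H"
  then have "((x,False,False),(x,True,(H$x$x = -1))) \<in> r_one H \<inter> r_minus_one H"
    using r_one_witness[of H x x] by simp
  then show False by (simp add: mem_r_one mem_r_minus_one)
qed

lemma s_tilde_flip_closed: "(p,q) \<in> s_tilde s \<Longrightarrow> (p, flip q) \<in> s_tilde s"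
  by (cases p; cases q) (simp add: mem_s_tilde)

lemma r_one_flip_free: "(p,q) \<in> r_one H \<Longrightarrow> (p, flip q) \<notin> r_one H"
  by (cases p; cases q) (auto simp: mem_r_one sg_def)

lemma r_minus_one_flip_free:
  assumes "pm1_matrix H" "(p,q) \<in> r_minus_one H"
  shows "(p, flip q) \<notin> r_minus_one H"
proof (cases p; cases q)
  fix x a b y c d assume p: "p = (x,a,b)" and q: "q = (y,c,d)"
  have "pm1_matrix (transp_if a H)" using assms(1) by (rule pm1_matrix_transp_if)
  then show ?thesis using assms(2) unfolding p q flip_app mem_r_minus_one pm1_matrix_def
    by (cases b; cases d) (auto simp: sg_def)
qed

lemma S_of_cases:
  assumes "A \<in> S_of S H"
  obtains "A = Id" | "A = t_tilde" | s where "s \<in> S" "s \<noteq> Id" "A = s_tilde s"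
    | "A = r_one H" | "A = r_minus_one H"
  using assms unfolding S_of_def by blast

lemma S_of_members:
  "Id \<in> S_of S H" "t_tilde \<in> S_of S H" "r_one H \<in> S_of S H" "r_minus_one H \<in> S_of S H"
  "s \<in> S \<Longrightarrow> s \<noteq> Id \<Longrightarrow> s_tilde s \<in> S_of S H"
  by (auto simp: S_of_def)

lemma single_valued_classes:
  fixes H :: "real^'a::finite^'a"
  assumes S: "assoc_scheme UNIV S" and n: "CARD('a) > 1" and H: "pm1_matrix H"
    and A: "A \<in> S_of S H" and sv: "single_valued A"
  shows "A = Id \<or> A = t_tilde"
proof -
  obtain y1 y2 :: 'a where y12: "y1 \<noteq> y2" using two_points[OF n] by blast
  from A show ?thesis
  proof (cases rule: S_of_cases)
    case (3 s)
    obtain u v where "(u,v) \<in> s" using scheme_nonempty[OF S 3(1)] by auto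
    then have "((u,False,False),(v,False,False)) \<in> A" "((u,False,False),(v,False,True)) \<in> A"
      using 3(3) by (auto simp: mem_s_tilde)
    then show ?thesis using sv unfolding single_valued_def by blast
  next
    case 4
    then have "((y1,False,False),(y,True,(H$y1$y = -1))) \<in> A" for y
      using r_one_witness[OF H] by simp
    then have "(y1,True,(H$y1$y1 = -1)) = (y2,True,(H$y1$y2 = -1))"
      using sv unfolding single_valued_def by blast
    then show ?thesis using y12 by simp
  next
    case 5
    then have "((y1,False,False),(y,True,(H$y1$y = 1))) \<in> A" for y
      using r_minus_one_witness[OF H] by simp
    then have "(y1,True,(H$y1$y1 = 1)) = (y2,True,(H$y1$y2 = 1))"
      using sv unfolding single_valued_def by blast
    then show ?thesis using y12 by simp
  qed auto
qed

lemma within_layer_class: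
  assumes "A \<in> S_of S H" "((x,a,b),(y,a,c)) \<in> A" "x \<noteq> y"
  shows "\<exists>s\<in>S. s \<noteq> Id \<and> A = s_tilde s"
  using assms(1)
proof (cases rule: S_of_cases)
  case 4
  then show ?thesis using assms(2) by (simp add: mem_r_one)
next
  case 5
  then show ?thesis using assms(2) by (simp add: mem_r_minus_one)
qed (use assms in \<open>auto simp: mem_t_tilde\<close>)

section \<open>Layered maps\<close>

(* (x,a,b) |-> (sigma_a x, a+e, b+eps_a x): permute each layer, possibly swap the two layers,
   and flip sign bits according to eps. *)
definition layered_map ::
  "bool \<Rightarrow> (bool \<Rightarrow> 'a \<Rightarrow> 'a) \<Rightarrow> (bool \<Rightarrow> 'a \<Rightarrow> bool) \<Rightarrow> 'a \<times> bool \<times> bool \<Rightarrow> 'a \<times> bool \<times> bool" where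
  "layered_map e \<sigma> \<epsilon> = (\<lambda>(x,a,b). (\<sigma> a x, a \<noteq> e, b \<noteq> \<epsilon> a x))"

lemma layered_map_app [simp]: "layered_map e \<sigma> \<epsilon> (x,a,b) = (\<sigma> a x, a \<noteq> e, b \<noteq> \<epsilon> a x)"
  by (simp add: layered_map_def)

lemma bij_layered_map:
  fixes \<sigma> :: "bool \<Rightarrow> 'a::finite \<Rightarrow> 'a"
  assumes "\<And>a. bij (\<sigma> a)"
  shows "bij (layered_map e \<sigma> \<epsilon>)"
proof -
  have "inj (layered_map e \<sigma> \<epsilon>)"
  proof (rule injI)
    fix p q assume h: "layered_map e \<sigma> \<epsilon> p = layered_map e \<sigma> \<epsilon> q"
    obtain x a b y c d where p: "p = (x,a,b)" and q: "q = (y,c,d)" by (metis prod.exhaust)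
    from h have ac: "a = c" by (auto simp: p q)
    with h have "\<sigma> a x = \<sigma> a y" by (auto simp: p q)
    then have "x = y" using assms[of a] by (simp add: bij_is_inj inj_eq)
    with h ac show "p = q" by (auto simp: p q)
  qed
  then show ?thesis by (simp add: bij_def finite_UNIV_inj_surj)
qed

(* Layered maps commute with the flip, so they fix t~. *)
lemma layered_map_t_tilde:
  fixes \<sigma> :: "bool \<Rightarrow> 'a::finite \<Rightarrow> 'a"
  assumes "\<And>a. bij (\<sigma> a)"
  shows "rel_image (layered_map e \<sigma> \<epsilon>) t_tilde = t_tilde"
proof (rule rel_image_eqI[OF bij_layered_map[OF assms]])
  fix p q :: "'a \<times> bool \<times> bool"
  obtain x a b y c d where p: "p = (x,a,b)" and q: "q = (y,c,d)" by (metis prod.exhaust)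
  have "\<sigma> a x = \<sigma> a y \<longleftrightarrow> x = y" using assms[of a] by (simp add: bij_is_inj inj_eq)
  then show "(layered_map e \<sigma> \<epsilon> p, layered_map e \<sigma> \<epsilon> q) \<in> t_tilde \<longleftrightarrow> (p,q) \<in> t_tilde"
    by (cases "a = c") (auto simp: p q mem_t_tilde)
qed

lemma layered_map_s_tilde:
  fixes \<sigma> :: "bool \<Rightarrow> 'a::finite \<Rightarrow> 'a"
  assumes "\<And>a. bij (\<sigma> a)" "\<And>a. rel_image (\<sigma> a) s = s'"
  shows "rel_image (layered_map e \<sigma> \<epsilon>) (s_tilde s) = s_tilde s'"
proof (rule rel_image_eqI[OF bij_layered_map[OF assms(1)]])
  fix p q :: "'a \<times> bool \<times> bool"
  obtain x a b y c d where p: "p = (x,a,b)" and q: "q = (y,c,d)" by (metis prod.exhaust)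
  show "(layered_map e \<sigma> \<epsilon> p, layered_map e \<sigma> \<epsilon> q) \<in> s_tilde s' \<longleftrightarrow> (p,q) \<in> s_tilde s"
    using assms(2)[of a] mem_rel_image_bij[OF assms(1)[of a]]
    by (cases "a = c") (auto simp: p q mem_s_tilde)
qed

(* The entry relation between H1 and H2 that makes a layered map respect r^1 and r^-1. *)
definition entry_relation ::
  "real^'a::finite^'a \<Rightarrow> real^'a^'a \<Rightarrow> bool \<Rightarrow> (bool \<Rightarrow> 'a \<Rightarrow> 'a) \<Rightarrow> (bool \<Rightarrow> 'a \<Rightarrow> bool) \<Rightarrow> bool" where
  "entry_relation H1 H2 e \<sigma> \<epsilon> \<longleftrightarrow>
     (\<forall>x y. transp_if e H2 $ \<sigma> False x $ \<sigma> True y = sg (\<epsilon> False x) * sg (\<epsilon> True y) * H1 $ x $ y)"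

lemma entry_relation_cross:
  assumes rel: "entry_relation H1 H2 e \<sigma> \<epsilon>" and "a \<noteq> c"
  shows "transp_if (a \<noteq> e) H2 $ \<sigma> a x $ \<sigma> c y = sg (b \<noteq> \<epsilon> a x) * sg (d \<noteq> \<epsilon> c y)
     \<longleftrightarrow> transp_if a H1 $ x $ y = sg b * sg d"
proof -
  have entry: "transp_if (a \<noteq> e) H2 $ \<sigma> a x $ \<sigma> c y
      = sg (\<epsilon> a x) * sg (\<epsilon> c y) * transp_if a H1 $ x $ y"
    using assms by (cases a) (auto simp: entry_relation_def transp_if_entry)
  show ?thesis
    unfolding entry sg_xor by (cases "\<epsilon> a x"; cases "\<epsilon> c y"; cases b; cases d) (auto simp: sg_def)
qed

lemma layered_map_r_classes:
  fixes \<sigma> :: "bool \<Rightarrow> 'a::finite \<Rightarrow> 'a"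
  assumes "\<And>a. bij (\<sigma> a)" and rel: "entry_relation H1 H2 e \<sigma> \<epsilon>"
  shows "rel_image (layered_map e \<sigma> \<epsilon>) (r_one H1) = r_one H2"
    and "rel_image (layered_map e \<sigma> \<epsilon>) (r_minus_one H1) = r_minus_one H2"
proof -
  have "(layered_map e \<sigma> \<epsilon> p, layered_map e \<sigma> \<epsilon> q) \<in> r_one H2 \<longleftrightarrow> (p,q) \<in> r_one H1"
   and "(layered_map e \<sigma> \<epsilon> p, layered_map e \<sigma> \<epsilon> q) \<in> r_minus_one H2 \<longleftrightarrow> (p,q) \<in> r_minus_one H1"
    for p q :: "'a \<times> bool \<times> bool"
  proof -
    obtain x a b y c d where p: "p = (x,a,b)" and q: "q = (y,c,d)" by (metis prod.exhaust)
    show "(layered_map e \<sigma> \<epsilon> p, layered_map e \<sigma> \<epsilon> q) \<in> r_one H2 \<longleftrightarrow> (p,q) \<in> r_one H1"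
      using entry_relation_cross[OF rel, of a c x y b d] by (cases "a = c") (auto simp: p q mem_r_one)
    show "(layered_map e \<sigma> \<epsilon> p, layered_map e \<sigma> \<epsilon> q) \<in> r_minus_one H2 \<longleftrightarrow> (p,q) \<in> r_minus_one H1"
      using entry_relation_cross[OF rel, of a c x y b d] by (cases "a = c") (auto simp: p q mem_r_minus_one)
  qed
  then show "rel_image (layered_map e \<sigma> \<epsilon>) (r_one H1) = r_one H2"
    and "rel_image (layered_map e \<sigma> \<epsilon>) (r_minus_one H1) = r_minus_one H2"
    by (auto intro!: rel_image_eqI bij_layered_map assms(1))
qed

definition layered_equiv ::
  "('a::finite \<times> 'a) set set \<Rightarrow> real^'a^'a \<Rightarrow> real^'a^'a \<Rightarrow> bool \<Rightarrow> (bool \<Rightarrow> 'a \<Rightarrow> 'a)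
     \<Rightarrow> (bool \<Rightarrow> 'a \<Rightarrow> bool) \<Rightarrow> bool" where
  "layered_equiv S H1 H2 e \<sigma> \<epsilon> \<longleftrightarrow>
     (\<forall>a. bij (\<sigma> a)) \<and> \<sigma> False \<in> Iso_grp S \<and>
     (\<forall>s\<in>S. rel_image (\<sigma> True) s = rel_image (\<sigma> False) s) \<and>
     entry_relation H1 H2 e \<sigma> \<epsilon>"

lemma layered_equiv_iso:
  assumes "layered_equiv S H1 H2 e \<sigma> \<epsilon>"
  shows "scheme_iso UNIV (S_of S H1) UNIV (S_of S H2) (layered_map e \<sigma> \<epsilon>)"
proof -
  let ?F = "layered_map e \<sigma> \<epsilon>"
  have bij: "\<And>a. bij (\<sigma> a)" and iso: "\<sigma> False \<in> Iso_grp S"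
    and rel: "entry_relation H1 H2 e \<sigma> \<epsilon>"
    using assms by (simp_all add: layered_equiv_def)
  have same: "rel_image (\<sigma> a) s = rel_image (\<sigma> False) s" if "s \<in> S" for s a
    using assms that by (cases a) (simp_all add: layered_equiv_def)
  have bF: "bij ?F" by (rule bij_layered_map[OF bij])
  have S_perm: "rel_image (\<sigma> False) ` (S - {Id}) = S - {Id}"
    using image_set_diff[OF inj_rel_image[OF bij[of False]], of S "{Id}"]
      Iso_grp_image[OF iso] rel_image_Id[OF bij[of False]] by simp
  have "rel_image ?F ` S_of S H1
      = {Id, t_tilde} \<union> (\<lambda>s. s_tilde (rel_image (\<sigma> False) s)) ` (S - {Id}) \<union> {r_one H2, r_minus_one H2}"
    unfolding S_of_def
    using rel_image_Id[OF bF] layered_map_t_tilde[OF bij] layered_map_r_classes[OF bij rel]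
      layered_map_s_tilde[OF bij same]
    by (simp add: image_Un image_image)
  also have "\<dots> = S_of S H2"
    unfolding S_of_def image_image[of s_tilde "rel_image (\<sigma> False)", symmetric] S_perm ..
  finally show ?thesis
    unfolding scheme_iso_def using bF inj_on_subset[OF inj_rel_image[OF bF] subset_UNIV]
    by (simp add: bij_betw_def)
qed

section \<open>Similarity of Hadamard matrices as layered equivalence\<close>

(* From a layered equivalence: H2 or H2^T equals (P'P)^-1 H1 Q'Q with P = P_(sigma_0^-1),
   Q = P_(sigma_1^-1), and the quotient has the automorphism sigma_0 sigma_1^-1. *)
lemma layered_equiv_similar:
  assumes "layered_equiv S H1 H2 e \<sigma> \<epsilon>"
  shows "hadamard_similar S H1 H2"
proof -
  have bij: "\<And>a. bij (\<sigma> a)" and isoF: "\<sigma> False \<in> Iso_grp S"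
    and same: "\<And>s. s \<in> S \<Longrightarrow> rel_image (\<sigma> True) s = rel_image (\<sigma> False) s"
    and rel: "entry_relation H1 H2 e \<sigma> \<epsilon>"
    using assms by (simp_all add: layered_equiv_def)
  have isoT: "\<sigma> True \<in> Iso_grp S"
    using isoF same bij by (simp add: Iso_grp_def)
  define \<beta> where "\<beta> = inv (\<sigma> False)"
  define \<alpha> where "\<alpha> = inv (\<sigma> True)"
  define p where "p = (\<lambda>k. sg (\<epsilon> False k))"
  define q where "q = (\<lambda>k. sg (\<epsilon> True k))"
  have pm1: "pm1 p" "pm1 q" unfolding pm1_def p_def q_def sg_def by auto
  have bij_\<beta>: "bij \<beta>" using bij by (simp add: \<beta>_def bij_imp_bij_inv)
  have iso_\<beta>\<alpha>: "\<beta> \<in> Iso_grp S" "\<alpha> \<in> Iso_grp S"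
    unfolding \<beta>_def \<alpha>_def using Iso_grp_inv isoF isoT by auto
  have conj: "transp_if e H2 = matrix_inv (sdiag p ** perm_mat \<beta>) ** H1 ** (sdiag q ** perm_mat \<alpha>)"
  proof (rule mat_eqI)
    fix i j
    have "\<sigma> False (\<beta> i) = i" "\<sigma> True (\<alpha> j) = j"
      unfolding \<beta>_def \<alpha>_def using bij by (meson bij_inv_eq_iff)+
    then have "transp_if e H2 $ i $ j = p (\<beta> i) * H1 $ \<beta> i $ \<alpha> j * q (\<alpha> j)"
      using rel unfolding entry_relation_def p_def q_def by (metis mult.commute mult.left_commute)
    then show "transp_if e H2 $ i $ j
        = (matrix_inv (sdiag p ** perm_mat \<beta>) ** H1 ** (sdiag q ** perm_mat \<alpha>)) $ i $ j"
      by (simp add: monomial_conj_entry[OF bij_\<beta> pm1(1)])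
  qed
  have aut: "inv \<beta> \<circ> \<alpha> \<in> Aut_grp S"
  proof -
    have "rel_image (inv \<beta> \<circ> \<alpha>) s = s" if s: "s \<in> S" for s
    proof -
      have "rel_image \<alpha> s \<in> S" using iso_\<beta>\<alpha>(2) s by (simp add: Iso_grp_def)
      then have "rel_image (\<sigma> False) (rel_image \<alpha> s) = rel_image (\<sigma> True) (rel_image \<alpha> s)"
        using same by simp
      then show ?thesis
        using rel_image_cancel_inv[OF bij[of True]] bij[of False]
        by (simp add: \<beta>_def \<alpha>_def rel_image_comp inv_inv_eq)
    qed
    moreover have "bij (inv \<beta> \<circ> \<alpha>)"
      using bij by (simp add: \<beta>_def \<alpha>_def inv_inv_eq bij_comp bij_imp_bij_inv)
    ultimately show ?thesis by (simp add: Aut_grp_def)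
  qed
  show ?thesis
    unfolding hadamard_similar_def
  proof (intro exI conjI)
    show "sdiag p \<in> sign_diags" "sdiag q \<in> sign_diags" using pm1 by (simp_all add: sign_diagsI)
    show "perm_mat \<beta> \<in> perm_mats (Iso_grp S)" "perm_mat \<alpha> \<in> perm_mats (Iso_grp S)"
      using iso_\<beta>\<alpha> by (simp_all add: perm_mats_def)
    show "H2 = matrix_inv (sdiag p ** perm_mat \<beta>) ** H1 ** (sdiag q ** perm_mat \<alpha>) \<or>
        transpose H2 = matrix_inv (sdiag p ** perm_mat \<beta>) ** H1 ** (sdiag q ** perm_mat \<alpha>)"
      using conj by (cases e) (simp_all add: transp_if_def)
    show "matrix_inv (sdiag p ** perm_mat \<beta>) ** (sdiag q ** perm_mat \<alpha>) \<in> semidirect_D (Aut_grp S)"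
    proof -
      have "pm1 (\<lambda>i. p (\<beta> i) * q (\<beta> i))"
        using pm1 unfolding pm1_def by (metis mult_1 mult_minus1 minus_minus)
      then show ?thesis
        unfolding monomial_quotient[OF bij_\<beta> pm1(1)] semidirect_D_def perm_mats_def
        using aut sign_diagsI by blast
    qed
  qed
qed

(* Conversely, similarity data (P'P)^-1 H1 Q'Q with P = P_beta, Q = P_alpha yield the layer
   permutations beta^-1, alpha^-1; the semidirect condition says they act alike on S. *)
lemma similar_layered_equiv:
  assumes "hadamard_similar S H1 H2"
  shows "\<exists>e \<sigma> \<epsilon>. layered_equiv S H1 H2 e \<sigma> \<epsilon>"
proof -
  obtain P' Q' P Q where P': "P' \<in> sign_diags" and Q': "Q' \<in> sign_diags"
    and P: "P \<in> perm_mats (Iso_grp S)" and Q: "Q \<in> perm_mats (Iso_grp S)"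
    and eq: "H2 = matrix_inv (P' ** P) ** H1 ** (Q' ** Q) \<or>
         transpose H2 = matrix_inv (P' ** P) ** H1 ** (Q' ** Q)"
    and sd: "matrix_inv (P' ** P) ** (Q' ** Q) \<in> semidirect_D (Aut_grp S)"
    using assms unfolding hadamard_similar_def by blast
  obtain p where p: "pm1 p" "P' = sdiag p" using P' by (rule sign_diagsE)
  obtain q where q: "pm1 q" "Q' = sdiag q" using Q' by (rule sign_diagsE)
  obtain \<beta> where \<beta>: "\<beta> \<in> Iso_grp S" "P = perm_mat \<beta>" using P by (auto simp: perm_mats_def)
  obtain \<alpha> where \<alpha>: "\<alpha> \<in> Iso_grp S" "Q = perm_mat \<alpha>" using Q by (auto simp: perm_mats_def)
  have bij_\<beta>: "bij \<beta>" and bij_\<alpha>: "bij \<alpha>" using \<beta> \<alpha> by (auto simp: Iso_grp_def)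
  obtain d \<rho> where d: "pm1 d" and \<rho>: "\<rho> \<in> Aut_grp S"
    and DR: "matrix_inv (P' ** P) ** (Q' ** Q) = sdiag d ** perm_mat \<rho>"
    using sd unfolding semidirect_D_def perm_mats_def by (auto elim: sign_diagsE)
  have "sdiag d ** perm_mat \<rho> = sdiag (\<lambda>i. p (\<beta> i) * q (\<beta> i)) ** perm_mat (inv \<beta> \<circ> \<alpha>)"
    using DR monomial_quotient[OF bij_\<beta> p(1), of q \<alpha>] by (simp add: p q \<beta> \<alpha>)
  then have \<rho>_eq: "\<rho> = inv \<beta> \<circ> \<alpha>" by (rule monomial_perm_unique[OF d])
  obtain e where e: "transp_if e H2 = matrix_inv (P' ** P) ** H1 ** (Q' ** Q)"
    using eq by (metis transp_if_def)
  define \<sigma> where "\<sigma> = (\<lambda>a::bool. if a then inv \<alpha> else inv \<beta>)"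
  define \<epsilon> where "\<epsilon> = (\<lambda>(a::bool) x. if a then q x = -1 else p x = -1)"
  have "layered_equiv S H1 H2 e \<sigma> \<epsilon>"
    unfolding layered_equiv_def
  proof (intro conjI allI ballI)
    show "bij (\<sigma> a)" for a using bij_\<alpha> bij_\<beta> by (simp add: \<sigma>_def bij_imp_bij_inv)
    show "\<sigma> False \<in> Iso_grp S" using Iso_grp_inv[OF \<beta>(1)] by (simp add: \<sigma>_def)
    show "rel_image (\<sigma> True) s = rel_image (\<sigma> False) s" if s: "s \<in> S" for s
    proof -
      let ?s0 = "rel_image (inv \<alpha>) s"
      have "?s0 \<in> S" using Iso_grp_inv[OF \<alpha>(1)] s by (simp add: Iso_grp_def)
      then have "rel_image (inv \<beta>) (rel_image \<alpha> ?s0) = ?s0"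
        using \<rho> by (simp add: Aut_grp_def \<rho>_eq rel_image_comp)
      then show ?thesis using rel_image_cancel_inv[OF bij_\<alpha>] by (simp add: \<sigma>_def)
    qed
    have "\<beta> (inv \<beta> x) = x" "\<alpha> (inv \<alpha> y) = y" for x y
      using bij_\<alpha> bij_\<beta> by (meson bij_inv_eq_iff)+
    then show "entry_relation H1 H2 e \<sigma> \<epsilon>"
      unfolding entry_relation_def e p q \<beta> \<alpha> monomial_conj_entry[OF bij_\<beta> p(1)]
      using pm1_sg[OF p(1)] pm1_sg[OF q(1)] by (simp add: \<sigma>_def \<epsilon>_def)
  qed
  then show ?thesis by blast
qed

section \<open>Isomorphisms between doubled schemes are layered maps\<close>

lemma scheme_isoD:
  assumes "scheme_iso UNIV S1 UNIV S2 \<phi>"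
  shows "bij \<phi>" and "A \<in> S1 \<Longrightarrow> rel_image \<phi> A \<in> S2"
  using assms by (auto simp: scheme_iso_def bij_betw_def)

lemma rel_image_inj_eq: "bij f \<Longrightarrow> rel_image f A = rel_image f B \<longleftrightarrow> A = B"
  using inj_rel_image by (metis injD)

(* t~ is the only non-diagonal class that is the graph of a function, so it is fixed. *)
lemma iso_fixes_t_tilde:
  fixes H1 H2 :: "real^'a::finite^'a"
  assumes S: "assoc_scheme UNIV S" and n: "CARD('a) > 1" and H2: "pm1_matrix H2"
    and iso: "scheme_iso UNIV (S_of S H1) UNIV (S_of S H2) \<phi>"
  shows "rel_image \<phi> t_tilde = t_tilde"
proof -
  have bij: "bij \<phi>" and img: "rel_image \<phi> t_tilde \<in> S_of S H2"
    using scheme_isoD[OF iso] S_of_members(2) by blast+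
  have "single_valued (t_tilde :: ('a \<times> bool \<times> bool) rel)"
    by (auto simp: single_valued_def mem_t_tilde)
  then have "single_valued (rel_image \<phi> t_tilde)"
    by (rule single_valued_rel_image[OF bij_is_inj[OF bij]])
  then have "rel_image \<phi> t_tilde = Id \<or> rel_image \<phi> t_tilde = t_tilde"
    by (rule single_valued_classes[OF S n H2 img])
  moreover have "t_tilde \<noteq> (Id :: ('a \<times> bool \<times> bool) rel)"
    using mem_t_tilde[of "(x,a,b)" "(x,a,b)"] by auto
  ultimately show ?thesis
    using rel_image_inj_eq[OF bij, of t_tilde Id] rel_image_Id[OF bij] by auto
qed

lemma commutes_flip:
  assumes "bij f" "rel_image f t_tilde = t_tilde"
  shows "f (flip p) = flip (f p)"
  using mem_rel_image_bij[OF assms(1), of p "flip p" t_tilde] assms(2) by (simp add: mem_t_tilde)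

(* r^1 and r^-1 are the flip-free classes joining different layers, so an isomorphism maps
   them into {r^1, r^-1}. *)
lemma iso_maps_r_classes:
  fixes H1 H2 :: "real^'a::finite^'a"
  assumes S: "assoc_scheme UNIV S" and n: "CARD('a) > 1"
    and H1: "pm1_matrix H1" and H2: "pm1_matrix H2"
    and iso: "scheme_iso UNIV (S_of S H1) UNIV (S_of S H2) \<phi>"
    and A: "A = r_one H1 \<or> A = r_minus_one H1"
  shows "rel_image \<phi> A = r_one H2 \<or> rel_image \<phi> A = r_minus_one H2"
proof -
  have bij: "bij \<phi>" and img: "rel_image \<phi> A \<in> S_of S H2"
    using scheme_isoD[OF iso] A S_of_members(3,4) by blast+
  have t: "rel_image \<phi> t_tilde = t_tilde" by (rule iso_fixes_t_tilde[OF S n H2 iso])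
  have inv_flip: "inv \<phi> (flip p) = flip (inv \<phi> p)" for p
    using commutes_flip[OF bij_imp_bij_inv[OF bij]] rel_image_inv_cancel[OF bij, of t_tilde] t by simp
  have flip_free: "(p,q) \<in> A \<Longrightarrow> (p, flip q) \<notin> A" for p q
    using A r_one_flip_free r_minus_one_flip_free[OF H1] by blast
  obtain x :: 'a and b where cross: "((x,False,False),(x,True,b)) \<in> A"
    using A r_one_witness[OF H1] r_minus_one_witness[OF H1] by blast
  from img show ?thesis
  proof (cases rule: S_of_cases)
    case 1
    then have "A = Id" using rel_image_inj_eq[OF bij, of A Id] rel_image_Id[OF bij] by simp
    then show ?thesis using cross by simp
  next
    case 2
    then have "A = t_tilde" using rel_image_inj_eq[OF bij, of A t_tilde] t by simp
    then show ?thesis using cross by (simp add: mem_t_tilde)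
  next
    case (3 s)
    obtain u v where "(u,v) \<in> s" using scheme_nonempty[OF S 3(1)] by auto
    then have uv: "((u,False,False),(v,False,False)) \<in> rel_image \<phi> A"
      using 3(3) by (simp add: mem_s_tilde)
    moreover have "((u,False,False),flip (v,False,False)) \<in> rel_image \<phi> A"
      using s_tilde_flip_closed uv 3(3) by metis
    ultimately have "(inv \<phi> (u,False,False), inv \<phi> (v,False,False)) \<in> A"
      "(inv \<phi> (u,False,False), flip (inv \<phi> (v,False,False))) \<in> A"
      by (simp_all only: mem_rel_image_inv[OF bij] inv_flip)
    then show ?thesis using flip_free by blast
  qed auto
qed

lemma iso_preserves_layers:
  fixes H1 H2 :: "real^'a::finite^'a"
  assumes S: "assoc_scheme UNIV S" and n: "CARD('a) > 1"
    and H1: "pm1_matrix H1" and H2: "pm1_matrix H2"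
    and iso: "scheme_iso UNIV (S_of S H1) UNIV (S_of S H2) \<phi>"
  shows "layer (\<phi> p) \<noteq> layer (\<phi> q) \<longleftrightarrow> layer p \<noteq> layer q"
proof -
  have bij: "bij \<phi>" by (rule scheme_isoD(1)[OF iso])
  have "rel_image \<phi> (r_one H1) \<noteq> rel_image \<phi> (r_minus_one H1)"
    using rel_image_inj_eq[OF bij] r_one_ne_r_minus_one[OF H1] by blast
  then have "rel_image \<phi> (r_one H1 \<union> r_minus_one H1) = r_one H2 \<union> r_minus_one H2"
    using iso_maps_r_classes[OF S n H1 H2 iso, of "r_one H1"]
      iso_maps_r_classes[OF S n H1 H2 iso, of "r_minus_one H1"]
    unfolding rel_image_Un by auto
  then have "rel_image \<phi> {(p,q). layer p \<noteq> layer q} = {(p,q). layer p \<noteq> layer q}"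
    unfolding cross_layer_eq .
  then show ?thesis
    using mem_rel_image_bij[OF bij, of p q "{(p,q). layer p \<noteq> layer q}"] by simp
qed

lemma layered_form:
  fixes \<phi> :: "'a::finite \<times> bool \<times> bool \<Rightarrow> 'a \<times> bool \<times> bool"
  assumes bij: "bij \<phi>" and flip: "\<And>p. \<phi> (flip p) = flip (\<phi> p)"
    and layers: "\<And>p q. layer (\<phi> p) \<noteq> layer (\<phi> q) \<longleftrightarrow> layer p \<noteq> layer q"
  obtains e \<sigma> \<epsilon> where "\<And>a. bij (\<sigma> a)" "\<phi> = layered_map e \<sigma> \<epsilon>"
proof -
  define e where "e = layer (\<phi> (undefined,False,False))"
  define \<sigma> where "\<sigma> = (\<lambda>a x. fst (\<phi> (x,a,False)))"
  define \<epsilon> where "\<epsilon> = (\<lambda>a x. snd (snd (\<phi> (x,a,False))))"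
  have lay: "layer (\<phi> (x,a,False)) = (a \<noteq> e)" for x a
    using layers[of "(x,a,False)" "(undefined,False,False)"] by (auto simp: e_def)
  have base: "\<phi> (x,a,False) = (\<sigma> a x, a \<noteq> e, \<epsilon> a x)" for x a
    using lay[of x a] by (cases "\<phi> (x,a,False)") (simp add: \<sigma>_def \<epsilon>_def)
  have "\<phi> (x,a,b) = layered_map e \<sigma> \<epsilon> (x,a,b)" for x a b
    using base flip[of "(x,a,False)"] by (cases b) auto
  then have \<phi>: "\<phi> = layered_map e \<sigma> \<epsilon>" by auto
  have "bij (\<sigma> a)" for a
  proof -
    have "inj (\<sigma> a)"
    proof (rule injI)
      fix x y assume "\<sigma> a x = \<sigma> a y"
      then have "\<phi> (x,a,\<epsilon> a x \<noteq> \<epsilon> a y) = \<phi> (y,a,False)" by (auto simp: \<phi>)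
      then show "x = y" using bij by (simp add: bij_is_inj inj_eq)
    qed
    then show ?thesis by (simp add: bij_def finite_UNIV_inj_surj)
  qed
  from this \<phi> show thesis by (rule that)
qed

lemma layered_iso_acts_alike:
  assumes S: "assoc_scheme UNIV S" and bij: "\<And>a. bij (\<sigma> a)"
    and iso: "scheme_iso UNIV (S_of S H1) UNIV (S_of S H2) (layered_map e \<sigma> \<epsilon>)"
    and s: "s \<in> S"
  shows "\<exists>s'\<in>S. \<forall>a. rel_image (\<sigma> a) s = s'"
proof (cases "s = Id")
  case True
  then show ?thesis using rel_image_Id[OF bij] scheme_Id[OF S] by auto
next
  case False
  let ?F = "layered_map e \<sigma> \<epsilon>"
  have bF: "bij ?F" by (rule scheme_isoD(1)[OF iso])
  obtain u v where uv: "(u,v) \<in> s" using scheme_nonempty[OF S s] by auto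
  have "(?F (u,False,False), ?F (v,False,False)) \<in> rel_image ?F (s_tilde s)"
    using uv mem_rel_image_bij[OF bF, of "(u,False,False)" "(v,False,False)" "s_tilde s"]
    by (simp add: mem_s_tilde)
  moreover have "\<sigma> False u \<noteq> \<sigma> False v"
    using scheme_offdiag[OF S s False uv] bij[of False] by (simp add: bij_is_inj inj_eq)
  moreover have "rel_image ?F (s_tilde s) \<in> S_of S H2"
    using scheme_isoD(2)[OF iso] S_of_members(5)[OF s False] by blast
  ultimately obtain s' where s': "s' \<in> S" "rel_image ?F (s_tilde s) = s_tilde s'"
    using within_layer_class by (metis layered_map_app)
  have "rel_image (\<sigma> a) s = s'" for a
  proof (rule rel_image_eqI[OF bij])
    fix x y
    show "(\<sigma> a x, \<sigma> a y) \<in> s' \<longleftrightarrow> (x,y) \<in> s"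
      using mem_rel_image_bij[OF bF, of "(x,a,False)" "(y,a,False)" "s_tilde s"] s'(2)
      by (simp add: mem_s_tilde)
  qed
  then show ?thesis using s'(1) by blast
qed

(* If a layered map sends r^1 to r^1 or to r^-1, it satisfies an entry relation, after
   absorbing the global sign into the layer-0 sign bits. *)
lemma layered_iso_entry_relation:
  fixes \<sigma> :: "bool \<Rightarrow> 'a::finite \<Rightarrow> 'a"
  assumes bij: "\<And>a. bij (\<sigma> a)" and H1: "pm1_matrix H1" and H2: "pm1_matrix H2"
    and r: "rel_image (layered_map e \<sigma> \<epsilon>) (r_one H1) \<in> {r_one H2, r_minus_one H2}"
  shows "\<exists>\<epsilon>'. entry_relation H1 H2 e \<sigma> \<epsilon>'"
proof -
  let ?F = "layered_map e \<sigma> \<epsilon>"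
  have bF: "bij ?F" by (rule bij_layered_map[OF bij])
  define c where "c = (rel_image ?F (r_one H1) \<noteq> r_one H2)"
  define \<epsilon>' where "\<epsilon>' = (\<lambda>a x. if a then \<epsilon> a x else \<epsilon> a x \<noteq> c)"
  have "transp_if e H2 $ \<sigma> False x $ \<sigma> True y = sg (\<epsilon>' False x) * sg (\<epsilon>' True y) * H1 $ x $ y"
    for x y
  proof -
    define b where "b = (H1$x$y = -1)"
    have h1: "H1 $ x $ y = sg b" unfolding b_def by (rule pm1_matrix_sg[OF H1])
    then have "((x,False,b),(y,True,False)) \<in> r_one H1"
      by (simp add: mem_r_one transp_if_entry sg_def)
    then have img: "((\<sigma> False x, e, b \<noteq> \<epsilon> False x), (\<sigma> True y, \<not> e, \<epsilon> True y))
        \<in> rel_image ?F (r_one H1)"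
      using mem_rel_image_bij[OF bF, of "(x,False,b)" "(y,True,False)"] by simp
    let ?T = "transp_if e H2 $ \<sigma> False x $ \<sigma> True y"
    have T: "?T = 1 \<or> ?T = -1"
      using pm1_matrix_transp_if[OF H2, of e] unfolding pm1_matrix_def by blast
    have "?T = (if c then -1 else 1) * sg (b \<noteq> \<epsilon> False x) * sg (\<epsilon> True y)"
    proof (cases c)
      case False
      then have "rel_image ?F (r_one H1) = r_one H2" by (simp add: c_def)
      with img False show ?thesis by (simp add: mem_r_one)
    next
      case True
      then have "rel_image ?F (r_one H1) = r_minus_one H2" using r by (auto simp: c_def)
      with img have "?T \<noteq> sg (b \<noteq> \<epsilon> False x) * sg (\<epsilon> True y)" by (simp add: mem_r_minus_one)
      with T True show ?thesis
        by (cases "b \<noteq> \<epsilon> False x"; cases "\<epsilon> True y") (auto simp: sg_def)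
    qed
    then show ?thesis
      using h1 by (cases c; cases b; cases "\<epsilon> False x"; cases "\<epsilon> True y") (simp_all add: \<epsilon>'_def sg_def)
  qed
  then have "entry_relation H1 H2 e \<sigma> \<epsilon>'" unfolding entry_relation_def by blast
  then show ?thesis by blast
qed

lemma iso_layered_equiv:
  fixes H1 H2 :: "real^'a::finite^'a"
  assumes S: "assoc_scheme UNIV S" and n: "CARD('a) > 1"
    and H1: "pm1_matrix H1" and H2: "pm1_matrix H2"
    and iso: "scheme_iso UNIV (S_of S H1) UNIV (S_of S H2) \<phi>"
  shows "\<exists>e \<sigma> \<epsilon>. layered_equiv S H1 H2 e \<sigma> \<epsilon>"
proof -
  have bij: "bij \<phi>" by (rule scheme_isoD(1)[OF iso])
  obtain e \<sigma> \<epsilon> where bij_\<sigma>: "\<And>a. bij (\<sigma> a)" and \<phi>: "\<phi> = layered_map e \<sigma> \<epsilon>"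
    using layered_form[OF bij commutes_flip[OF bij iso_fixes_t_tilde[OF S n H2 iso]]
        iso_preserves_layers[OF S n H1 H2 iso]] by blast
  have alike: "\<exists>s'\<in>S. \<forall>a. rel_image (\<sigma> a) s = s'" if "s \<in> S" for s
    using layered_iso_acts_alike[OF S bij_\<sigma> iso[unfolded \<phi>] that] .
  have iso_\<sigma>: "\<sigma> False \<in> Iso_grp S"
    using alike bij_\<sigma> by (fastforce simp: Iso_grp_def)
  have same: "\<forall>s\<in>S. rel_image (\<sigma> True) s = rel_image (\<sigma> False) s"
    using alike by fastforce
  have "rel_image (layered_map e \<sigma> \<epsilon>) (r_one H1) \<in> {r_one H2, r_minus_one H2}"
    using iso_maps_r_classes[OF S n H1 H2 iso, of "r_one H1"] by (simp add: \<phi>)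
  then obtain \<epsilon>' where "entry_relation H1 H2 e \<sigma> \<epsilon>'"
    using layered_iso_entry_relation[where \<sigma> = \<sigma>, OF bij_\<sigma> H1 H2] by blast
  then have "layered_equiv S H1 H2 e \<sigma> \<epsilon>'"
    using bij_\<sigma> iso_\<sigma> same by (simp add: layered_equiv_def)
  then show ?thesis by blast
qed

theorem theorem1p2:
  fixes S :: "('a::finite \<times> 'a) set set"
    and H1 H2 :: "real^'a^'a"
  assumes "assoc_scheme (UNIV :: 'a set) S"
    and "CARD('a) > 1"
    and "hadamard H1" and "hadamard H2"
  shows "schemes_isomorphic (UNIV :: ('a \<times> bool \<times> bool) set) (S_of S H1) UNIV (S_of S H2)
         \<longleftrightarrow> hadamard_similar S H1 H2"
proof
  assume "schemes_isomorphic (UNIV :: ('a \<times> bool \<times> bool) set) (S_of S H1) UNIV (S_of S H2)"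
  then obtain \<phi> where "scheme_iso UNIV (S_of S H1) UNIV (S_of S H2) \<phi>"
    unfolding schemes_isomorphic_def by blast
  then obtain e \<sigma> \<epsilon> where "layered_equiv S H1 H2 e \<sigma> \<epsilon>"
    using iso_layered_equiv assms hadamard_pm1_matrix by blast
  then show "hadamard_similar S H1 H2" by (rule layered_equiv_similar)
next
  assume "hadamard_similar S H1 H2"
  then obtain e \<sigma> \<epsilon> where "layered_equiv S H1 H2 e \<sigma> \<epsilon>"
    using similar_layered_equiv by blast
  then show "schemes_isomorphic (UNIV :: ('a \<times> bool \<times> bool) set) (S_of S H1) UNIV (S_of S H2)"
    unfolding schemes_isomorphic_def using layered_equiv_iso by blast
qed

end
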